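(* Let $G=(V,E)$ be a directed graph, $T=\{t_1,\dots,t_{n_T}\}$ a finite task set, and for each $t_j\in T$ let $W^j=\{w^j_{uv}\in[0,1]:(u,v)\in E\}$. Let $\mathcal{L}:V\to\{a_1,\dots,a_{n_A}\}$ be a location map and $q_j^k\ge 0$ completion qualities for each task $t_j$ and sub-area $a_k$. Let $V_R\subseteq V$ and for each $v_i\in V_R$ let $T_i\subseteq T$. Then the multi-task diffusion function $f:2^{V_R}\to\mathbb{R}_{\ge 0}$ defined in the context is monotone and submodular, i.e. for all $S_1\subseteq S_2\subseteq V_R$ and $u\in V_R\setminus S_2$: $f(S_1)\le f(S_2)$ and $f(S_1\cup\{u\})-f(S_1)\ge f(S_2\cup\{u\})-f(S_2)$.
   Context: For a task $t_j$, a realization $g$ of $W^j$ is a random spanning subgraph $(V,E_g)$ of $G$ in which each edge $(u,v)\in E$ is included independently with probability $w^j_{uv}$; $\Pr[g;W^j]=\prod_{e\in E_g}w^j_e\prod_{e\in E\setminus E_g}(1-w^j_e)$. For $A\subseteq V$, $I_g(A)$ is the set of nodes reachable from a node of $A$ by a directed path in $g$ (including $A$). For $S\subseteq V_R$, $S^j=\{v_i\in S: t_j\in T_i\}$. The multi-task diffusion function is $f(S)=\frac{1}{n_T}\sum_{t_j\in T}\sum_{g}\Pr[g;W^j]\sum_{v\in I_g(S^j)}q_j^{\mathcal{L}(v)}$. *)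

theory Defs
  imports Complex_Main
begin

definition real_prob :: "('v \<times> 'v) set \<Rightarrow> ('v \<Rightarrow> 'v \<Rightarrow> real) \<Rightarrow> ('v \<times> 'v) set \<Rightarrow> real" where
  "real_prob E w g = (\<Prod>e\<in>g. w (fst e) (snd e)) * (\<Prod>e\<in>E - g. 1 - w (fst e) (snd e))"

definition reach :: "('v \<times> 'v) set \<Rightarrow> 'v set \<Rightarrow> 'v set" where
  "reach g A = {v. \<exists>a\<in>A. (a, v) \<in> g\<^sup>*}"

definition task_seeds :: "('v \<Rightarrow> 't set) \<Rightarrow> 'v set \<Rightarrow> 't \<Rightarrow> 'v set" where
  "task_seeds Ti S j = {v\<in>S. j \<in> Ti v}"

definition diffusion ::
  "('v \<times> 'v) set \<Rightarrow> 't set \<Rightarrow> ('t \<Rightarrow> 'v \<Rightarrow> 'v \<Rightarrow> real) \<Rightarrow> ('v \<Rightarrow> 'a)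
   \<Rightarrow> ('t \<Rightarrow> 'a \<Rightarrow> real) \<Rightarrow> ('v \<Rightarrow> 't set) \<Rightarrow> 'v set \<Rightarrow> real" where
  "diffusion E T w L q Ti S =
     (1 / real (card T)) * (\<Sum>j\<in>T. \<Sum>g\<in>Pow E.
        real_prob E (w j) g * (\<Sum>v\<in>reach g (task_seeds Ti S j). q j (L v)))"

end

theory Submission
  imports Defs
begin

text \<open>For a fixed task and a fixed realization g, the inner sum of the diffusion function is a
  weighted coverage function: it sums the nonnegative weights q over the set reached from the
  seeds, and the map from seeds to reached set preserves unions. Coverage functions are monotone
  and submodular, because the marginal gain of u at S is the weight of the part of the set
  covered by u that S does not already cover. Both properties survive nonnegative linear
  combinations, so they pass to the expectation over realizations and the average over tasks.\<close>

definition submodular_on :: "'a set \<Rightarrow> ('a set \<Rightarrow> 'b::ordered_ab_group_add) \<Rightarrow> bool" where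
  "submodular_on X f \<longleftrightarrow>
     (\<forall>A B u. A \<subseteq> B \<longrightarrow> B \<subseteq> X \<longrightarrow> u \<in> X - B \<longrightarrow> f (B \<union> {u}) - f B \<le> f (A \<union> {u}) - f A)"

lemma submodular_onI:
  assumes "\<And>A B u. A \<subseteq> B \<Longrightarrow> B \<subseteq> X \<Longrightarrow> u \<in> X - B \<Longrightarrow> f (B \<union> {u}) - f B \<le> f (A \<union> {u}) - f A"
  shows "submodular_on X f"
  using assms unfolding submodular_on_def by blast

lemma submodular_onD:
  "submodular_on X f \<Longrightarrow> A \<subseteq> B \<Longrightarrow> B \<subseteq> X \<Longrightarrow> u \<in> X - B \<Longrightarrow> f (B \<union> {u}) - f B \<le> f (A \<union> {u}) - f A"
  unfolding submodular_on_def by blast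

lemma submodular_on_sum:
  fixes f :: "'i \<Rightarrow> 'a set \<Rightarrow> 'b::ordered_ab_group_add"
  assumes "\<And>i. i \<in> I \<Longrightarrow> submodular_on X (f i)"
  shows "submodular_on X (\<lambda>S. \<Sum>i\<in>I. f i S)"
proof (rule submodular_onI)
  fix A B u assume "A \<subseteq> B" "B \<subseteq> X" "u \<in> X - B"
  then have "(\<Sum>i\<in>I. f i (B \<union> {u}) - f i B) \<le> (\<Sum>i\<in>I. f i (A \<union> {u}) - f i A)"
    using assms by (intro sum_mono) (blast dest: submodular_onD)
  then show "(\<Sum>i\<in>I. f i (B \<union> {u})) - (\<Sum>i\<in>I. f i B) \<le> (\<Sum>i\<in>I. f i (A \<union> {u})) - (\<Sum>i\<in>I. f i A)"
    by (simp add: sum_subtractf)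
qed

lemma submodular_on_cmult:
  fixes f :: "'a set \<Rightarrow> 'b::ordered_ring"
  assumes "submodular_on X f" and "0 \<le> c"
  shows "submodular_on X (\<lambda>S. c * f S)"
proof (rule submodular_onI)
  fix A B u assume "A \<subseteq> B" "B \<subseteq> X" "u \<in> X - B"
  then have "c * (f (B \<union> {u}) - f B) \<le> c * (f (A \<union> {u}) - f A)"
    using assms by (intro mult_left_mono) (blast dest: submodular_onD)+
  then show "c * f (B \<union> {u}) - c * f B \<le> c * f (A \<union> {u}) - c * f A"
    by (simp add: right_diff_distrib)
qed

lemma mono_on_sum:
  fixes f :: "'i \<Rightarrow> 'a::order \<Rightarrow> 'b::ordered_comm_monoid_add"
  assumes "\<And>i. i \<in> I \<Longrightarrow> mono_on X (f i)"
  shows "mono_on X (\<lambda>x. \<Sum>i\<in>I. f i x)"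
  using assms by (intro mono_onI sum_mono) (blast dest: mono_onD)

lemma mono_on_cmult:
  fixes f :: "'a::order \<Rightarrow> 'b::ordered_semiring"
  assumes "mono_on X f" and "0 \<le> c"
  shows "mono_on X (\<lambda>x. c * f x)"
  using assms by (intro mono_onI mult_left_mono) (blast dest: mono_onD)+

lemma sum_Un_minus:
  fixes c :: "'a \<Rightarrow> 'b::ab_group_add"
  assumes "finite R" and "finite U"
  shows "sum c (R \<union> U) - sum c R = sum c (U - R)"
proof -
  have "sum c (R \<union> (U - R)) = sum c R + sum c (U - R)"
    using assms by (intro sum.union_disjoint) auto
  then show ?thesis by simp
qed

context
  fixes cover :: "'a set \<Rightarrow> 'b set" and X :: "'a set" and c :: "'b \<Rightarrow> 'c::ordered_ab_group_add"
  assumes cover_Un: "\<And>A B. cover (A \<union> B) = cover A \<union> cover B"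
    and finite_cover: "finite (cover X)"
    and nonneg: "\<And>v. v \<in> cover X \<Longrightarrow> 0 \<le> c v"
begin

lemma cover_mono: "A \<subseteq> B \<Longrightarrow> cover A \<subseteq> cover B"
  by (metis Un_upper1 cover_Un sup.absorb2)

lemma mono_on_sum_cover: "mono_on (Pow X) (\<lambda>S. sum c (cover S))"
proof (rule mono_onI)
  fix A B assume "A \<in> Pow X" "B \<in> Pow X" "A \<le> B"
  then have "cover A \<subseteq> cover B" "cover B \<subseteq> cover X"
    using cover_mono by auto
  then show "sum c (cover A) \<le> sum c (cover B)"
    using finite_cover nonneg by (intro sum_mono2) (auto intro: finite_subset)
qed

lemma submodular_on_sum_cover: "submodular_on X (\<lambda>S. sum c (cover S))"
proof (rule submodular_onI)
  fix A B u assume "A \<subseteq> B" "B \<subseteq> X" "u \<in> X - B"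
  then have AB: "cover A \<subseteq> cover B" and "cover B \<subseteq> cover X" and uX: "cover {u} \<subseteq> cover X"
    using cover_mono by auto
  then have fin: "finite (cover A)" "finite (cover B)" "finite (cover {u})"
    using finite_cover by (auto intro: finite_subset)
  have "sum c (cover {u} - cover B) \<le> sum c (cover {u} - cover A)"
    using AB uX fin nonneg by (intro sum_mono2) auto
  then show "sum c (cover (B \<union> {u})) - sum c (cover B) \<le> sum c (cover (A \<union> {u})) - sum c (cover A)"
    by (simp only: cover_Un sum_Un_minus[OF fin(2,3)] sum_Un_minus[OF fin(1,3)])
qed

end

lemma reach_Un: "reach g (A \<union> B) = reach g A \<union> reach g B"
  unfolding reach_def by blast

lemma reach_subset:
  assumes "g \<subseteq> V \<times> V" and "A \<subseteq> V"
  shows "reach g A \<subseteq> V"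
proof
  fix v assume "v \<in> reach g A"
  then obtain a where "a \<in> A" and "(a, v) \<in> g\<^sup>*"
    unfolding reach_def by blast
  from \<open>(a, v) \<in> g\<^sup>*\<close> show "v \<in> V"
    by (cases rule: rtranclE) (use \<open>a \<in> A\<close> assms in auto)
qed

lemma task_seeds_Un: "task_seeds Ti (A \<union> B) j = task_seeds Ti A j \<union> task_seeds Ti B j"
  unfolding task_seeds_def by blast

lemma task_seeds_subset: "task_seeds Ti A j \<subseteq> A"
  unfolding task_seeds_def by blast

lemma real_prob_nonneg:
  assumes "g \<subseteq> E" and "\<And>u v. (u, v) \<in> E \<Longrightarrow> 0 \<le> w u v \<and> w u v \<le> 1"
  shows "0 \<le> real_prob E w g"
  unfolding real_prob_def using assms
  by (intro mult_nonneg_nonneg prod_nonneg) (auto simp: subset_iff)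

lemma
  fixes c :: "'v \<Rightarrow> 'c::ordered_ab_group_add"
  assumes "finite V" and "g \<subseteq> V \<times> V" and "X \<subseteq> V" and "\<And>v. v \<in> V \<Longrightarrow> 0 \<le> c v"
  shows mono_on_sum_reach_task_seeds: "mono_on (Pow X) (\<lambda>S. sum c (reach g (task_seeds Ti S j)))"
    and submodular_on_sum_reach_task_seeds: "submodular_on X (\<lambda>S. sum c (reach g (task_seeds Ti S j)))"
proof -
  have reach_V: "reach g (task_seeds Ti X j) \<subseteq> V"
    using assms(2) task_seeds_subset assms(3) by (rule reach_subset[OF _ order_trans])
  then have "finite (reach g (task_seeds Ti X j))"
    using assms(1) by (rule finite_subset)
  moreover have "\<And>v. v \<in> reach g (task_seeds Ti X j) \<Longrightarrow> 0 \<le> c v"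
    using reach_V assms(4) by blast
  ultimately show "mono_on (Pow X) (\<lambda>S. sum c (reach g (task_seeds Ti S j)))"
    and "submodular_on X (\<lambda>S. sum c (reach g (task_seeds Ti S j)))"
    by (simp_all add: mono_on_sum_cover submodular_on_sum_cover task_seeds_Un reach_Un)
qed

theorem theorem2:
  fixes V :: "'v set" and E :: "('v \<times> 'v) set" and T :: "'t set"
    and w :: "'t \<Rightarrow> 'v \<Rightarrow> 'v \<Rightarrow> real" and L :: "'v \<Rightarrow> 'a" and Areas :: "'a set"
    and q :: "'t \<Rightarrow> 'a \<Rightarrow> real" and VR :: "'v set" and Ti :: "'v \<Rightarrow> 't set"
  assumes "finite V" and "E \<subseteq> V \<times> V"
    and "finite T"
    and "\<And>j u v. j \<in> T \<Longrightarrow> (u, v) \<in> E \<Longrightarrow> 0 \<le> w j u v \<and> w j u v \<le> 1"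
    and "finite Areas" and "L ` V \<subseteq> Areas"
    and "\<And>j k. j \<in> T \<Longrightarrow> k \<in> Areas \<Longrightarrow> 0 \<le> q j k"
    and "VR \<subseteq> V" and "\<And>v. v \<in> VR \<Longrightarrow> Ti v \<subseteq> T"
  shows "\<forall>S1 S2 u. S1 \<subseteq> S2 \<and> S2 \<subseteq> VR \<and> u \<in> VR - S2 \<longrightarrow>
           diffusion E T w L q Ti S1 \<le> diffusion E T w L q Ti S2 \<and>
           diffusion E T w L q Ti (S1 \<union> {u}) - diffusion E T w L q Ti S1
             \<ge> diffusion E T w L q Ti (S2 \<union> {u}) - diffusion E T w L q Ti S2"
proof -
  define cov where "cov j g S = (\<Sum>v\<in>reach g (task_seeds Ti S j). q j (L v))" for j g S
  have diffusion_eq: "diffusion E T w L q Ti =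
      (\<lambda>S. 1 / real (card T) * (\<Sum>j\<in>T. \<Sum>g\<in>Pow E. real_prob E (w j) g * cov j g S))"
    by (simp add: fun_eq_iff diffusion_def cov_def)
  have prob_nonneg: "0 \<le> real_prob E (w j) g" if "j \<in> T" "g \<in> Pow E" for j g
    using that assms(4) by (intro real_prob_nonneg) auto
  have cov: "mono_on (Pow VR) (cov j g)" "submodular_on VR (cov j g)" if "j \<in> T" "g \<in> Pow E" for j g
    unfolding cov_def[abs_def] using assms(1,2,6,7,8) that
    by (auto intro!: mono_on_sum_reach_task_seeds submodular_on_sum_reach_task_seeds)
  have mono: "mono_on (Pow VR) (diffusion E T w L q Ti)"
    unfolding diffusion_eq by (intro mono_on_cmult mono_on_sum) (simp_all add: cov prob_nonneg)
  have submodular: "submodular_on VR (diffusion E T w L q Ti)"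
    unfolding diffusion_eq by (intro submodular_on_cmult submodular_on_sum) (simp_all add: cov prob_nonneg)
  show ?thesis
  proof (intro allI impI)
    fix S1 S2 u assume "S1 \<subseteq> S2 \<and> S2 \<subseteq> VR \<and> u \<in> VR - S2"
    then show "diffusion E T w L q Ti S1 \<le> diffusion E T w L q Ti S2 \<and>
        diffusion E T w L q Ti (S1 \<union> {u}) - diffusion E T w L q Ti S1
          \<ge> diffusion E T w L q Ti (S2 \<union> {u}) - diffusion E T w L q Ti S2"
      using mono_onD[OF mono, of S1 S2] submodular_onD[OF submodular, of S1 S2 u] by auto
  qed
qed

end
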